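(* Let $0<q<1$ and $\nu\in\mathbb{R}$. Define, for $z\in\mathbb{C}\setminus(-\infty,0]$ (principal branches of powers), $$I_\nu^{(3)}((1-q^2)z;q^2)=\sum_{k=0}^\infty\frac{q^{k(\nu+k)}(1-q^2)^k(z/2)^{\nu+2k}}{(q^2;q^2)_k\,\Gamma_{q^2}(\nu+k+1)},$$ and, for non-integer $\nu$, $$K_\nu^{(3)}((1-q^2)z;q^2)=\tfrac12 q^{-\nu^2+\nu}\Gamma_{q^2}(\nu)\Gamma_{q^2}(1-\nu)\left[I_{-\nu}^{(3)}((1-q^2)z;q^2)-I_\nu^{(3)}((1-q^2)z;q^2)\right],$$ extended to integer $\nu=n$ by taking the limit $\nu\to n$. Then $$q^{-\nu/2}K_{\nu-1}^{(3)}((1-q^2)z;q^2)-q^{\nu/2}K_{\nu+1}^{(3)}((1-q^2)z;q^2)=-\frac{2}{(1-q^2)z}(q^{-\nu}-q^\nu)K_\nu^{(3)}((1-q^2)q^{1/2}z;q^2),$$ $$q^{-\nu/2}K_{\nu-1}^{(3)}((1-q^2)z;q^2)+q^{\nu/2}K_{\nu+1}^{(3)}((1-q^2)z;q^2)=-\frac{4}{(1-q^2)z}K_\nu^{(3)}((1-q^2)q^{-1/2}z;q^2)+\frac{2}{(1-q^2)z}(q^{-\nu}+q^\nu)K_\nu^{(3)}((1-q^2)q^{1/2}z;q^2).$$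
   Context: $(a;q)_k=\prod_{j=0}^{k-1}(1-aq^j)$, $(a;q)_\infty=\prod_{j\ge0}(1-aq^j)$. The $q$-Gamma function is $\Gamma_{q}(x)=\frac{(q;q)_\infty}{(q^x;q)_\infty}(1-q)^{1-x}$, used here with base $q^2$. *)

theory Defs
  imports "HOL-Analysis.Analysis"
begin

definition qpoch :: "real \<Rightarrow> real \<Rightarrow> nat \<Rightarrow> real" where
  "qpoch a q k = (\<Prod>j<k. 1 - a * q ^ j)"

definition qpoch_inf :: "real \<Rightarrow> real \<Rightarrow> real" where
  "qpoch_inf a q = (\<Prod>j. 1 - a * q ^ j)"

definition qGamma :: "real \<Rightarrow> real \<Rightarrow> real" where
  "qGamma q x = qpoch_inf q q / qpoch_inf (q powr x) q * (1 - q) powr (1 - x)"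

text \<open>I3 q nu z stands for I_nu^(3)((1-q^2) z; q^2).\<close>
definition I3 :: "real \<Rightarrow> real \<Rightarrow> complex \<Rightarrow> complex" where
  "I3 q \<nu> z = (\<Sum>k. complex_of_real
      (q powr (real k * (\<nu> + real k)) * (1 - q^2) ^ k
        / (qpoch (q^2) (q^2) k * qGamma (q^2) (\<nu> + real k + 1)))
      * (z / 2) powr complex_of_real (\<nu> + 2 * real k))"

definition K3_form :: "real \<Rightarrow> real \<Rightarrow> complex \<Rightarrow> complex" where
  "K3_form q \<nu> z = complex_of_real (1/2 * q powr (- (\<nu>^2) + \<nu>)
      * qGamma (q^2) \<nu> * qGamma (q^2) (1 - \<nu>)) * (I3 q (- \<nu>) z - I3 q \<nu> z)"

definition K3 :: "real \<Rightarrow> real \<Rightarrow> complex \<Rightarrow> complex" where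
  "K3 q \<nu> z = (if \<nu> \<in> \<int> then Lim (at \<nu>) (\<lambda>\<mu>. K3_form q \<mu> z) else K3_form q \<nu> z)"

end

(*
  The coefficients c(nu,k) of I_nu^(3) obey two contiguous relations in the order: c(nu-1,k) and
  c(nu+1,k-1) are explicit multiples of c(nu,k), coming from Gamma_q(x+1) = (1-q^x)/(1-q) Gamma_q(x).
  Resumming, q^(-nu/2) I_(nu-1) -+ q^(nu/2) I_(nu+1) become combinations of I_nu at the rescaled
  arguments q^(1/2) z and q^(-1/2) z. The prefactor of K_nu changes sign under nu -> nu+1, so the
  relations for I_nu and I_(-nu) combine into those for K_nu at non-integer orders.
  At an integer n, the zeros of 1/Gamma_q at the non-positive integers give I_(-n) = I_n. Since
  (z/2)^(-nu) I_nu is entire in the order, (I_(-mu) - I_mu)/(mu - n) converges as mu -> n, while the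
  prefactor is a quotient by theta(q^(2mu); q^2), which has a simple zero at n. Hence K_mu -> K_n,
  and the relations pass to the limit.
*)

theory Submission
  imports Defs "HOL-Complex_Analysis.Complex_Analysis"
begin

section \<open>Products \<open>\<Prod>j. 1 - x a\<^sub>j\<close>\<close>

definition prod_one_minus :: "(nat \<Rightarrow> real) \<Rightarrow> 'a::{real_normed_field,banach} \<Rightarrow> 'a" where
  "prod_one_minus a x = (\<Prod>j. 1 - x * of_real (a j))"

context
  fixes a :: "nat \<Rightarrow> real"
  assumes summable_a: "summable (\<lambda>j. \<bar>a j\<bar>)"
begin

lemma convergent_prod_one_minus:
  fixes x :: "'a::{real_normed_field,banach}"
  shows "convergent_prod (\<lambda>j. 1 - x * of_real (a j))"
proof -
  have "summable (\<lambda>j. norm x * \<bar>a j\<bar>)"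
    using summable_a by (rule summable_mult)
  then have "summable (\<lambda>j. norm ((1 - x * of_real (a j)) - 1))"
    by (simp add: norm_mult)
  then show ?thesis
    by (intro abs_convergent_prod_imp_convergent_prod summable_imp_abs_convergent_prod)
qed

lemma prod_one_minus_LIMSEQ:
  fixes x :: "'a::{real_normed_field,banach}"
  shows "(\<lambda>n. \<Prod>j<n. 1 - x * of_real (a j)) \<longlonglongrightarrow> prod_one_minus a x"
  using convergent_prod_LIMSEQ[OF convergent_prod_one_minus, of x]
  unfolding prod_one_minus_def by (subst LIMSEQ_lessThan_iff_atMost)

lemma uniform_limit_prod_one_minus:
  "uniform_limit (cball 0 R) (\<lambda>n x. \<Prod>j<n. 1 - x * of_real (a j))
     (prod_one_minus a :: 'a::{real_normed_field,banach,heine_borel} \<Rightarrow> 'a) sequentially"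
proof -
  have "uniform_limit (cball 0 R) (\<lambda>n x::'a. \<Sum>j<n. norm ((1 - x * of_real (a j)) - 1))
          (\<lambda>x. \<Sum>j. norm ((1 - x * of_real (a j)) - 1)) sequentially"
  proof (rule Weierstrass_m_test_ev)
    show "\<forall>\<^sub>F j in sequentially. \<forall>x\<in>cball (0::'a) R.
            norm (norm ((1 - x * of_real (a j)) - 1)) \<le> R * \<bar>a j\<bar>"
      by (intro always_eventually) (auto simp: norm_mult intro!: mult_right_mono)
    show "summable (\<lambda>j. R * \<bar>a j\<bar>)"
      using summable_a by (rule summable_mult)
  qed
  then have "uniformly_convergent_on (cball (0::'a) R) (\<lambda>n x. \<Prod>j<n. 1 - x * of_real (a j))"
    by (intro uniformly_convergent_on_prod') (auto intro!: continuous_intros simp: uniformly_convergent_on_def)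
  then obtain l where l: "uniform_limit (cball (0::'a) R) (\<lambda>n x. \<Prod>j<n. 1 - x * of_real (a j)) l sequentially"
    unfolding uniformly_convergent_on_def by blast
  have "l x = prod_one_minus a x" if "x \<in> cball 0 R" for x
    using LIMSEQ_unique[OF tendsto_uniform_limitI[OF l that] prod_one_minus_LIMSEQ] .
  with l show ?thesis
    by (metis (no_types, lifting) uniform_limit_cong')
qed

lemma isCont_prod_one_minus:
  "isCont (prod_one_minus a :: 'a::{real_normed_field,banach,heine_borel} \<Rightarrow> 'a) x"
proof -
  have "continuous_on (cball 0 (norm x + 1)) (prod_one_minus a :: 'a \<Rightarrow> 'a)"
    by (rule uniform_limit_theorem[OF _ uniform_limit_prod_one_minus])
       (auto intro!: always_eventually continuous_intros)
  then show ?thesis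
    by (rule continuous_on_interior) (simp add: interior_cball)
qed

lemma holomorphic_prod_one_minus: "(prod_one_minus a :: complex \<Rightarrow> complex) holomorphic_on UNIV"
proof (rule holomorphic_uniform_sequence[where f = "\<lambda>n x. \<Prod>j<n. 1 - x * of_real (a j)"])
  fix x :: complex
  have "cball x 1 \<subseteq> cball 0 (norm x + 1)"
  proof
    fix y assume "y \<in> cball x 1"
    then show "y \<in> cball 0 (norm x + 1)"
      using norm_triangle_sub[of y x] by (simp add: dist_norm norm_minus_commute)
  qed
  then show "\<exists>d>0. cball x d \<subseteq> UNIV \<and>
               uniform_limit (cball x d) (\<lambda>n x. \<Prod>j<n. 1 - x * of_real (a j)) (prod_one_minus a) sequentially"
    by (intro exI[of _ 1]) (auto intro: uniform_limit_on_subset[OF uniform_limit_prod_one_minus])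
qed (auto intro!: holomorphic_intros)

lemma norm_prod_one_minus_le:
  fixes x :: "'a::{real_normed_field,banach}"
  shows "norm (prod_one_minus a x) \<le> exp (norm x * (\<Sum>j. \<bar>a j\<bar>))"
proof (rule tendsto_le[OF _ tendsto_const tendsto_norm[OF prod_one_minus_LIMSEQ]])
  show "\<forall>\<^sub>F n in sequentially. norm (\<Prod>j<n. 1 - x * of_real (a j)) \<le> exp (norm x * (\<Sum>j. \<bar>a j\<bar>))"
  proof (intro always_eventually allI)
    fix n
    have "norm (\<Prod>j<n. 1 - x * of_real (a j)) \<le> (\<Prod>j<n. 1 + norm x * \<bar>a j\<bar>)"
      unfolding prod_norm[symmetric]
      using norm_triangle_ineq4[of 1 "x * of_real (a _)"] by (intro prod_mono) (auto simp: norm_mult)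
    also have "\<dots> \<le> exp (\<Sum>j<n. norm x * \<bar>a j\<bar>)"
      by (rule prod_le_exp_sum) auto
    also have "(\<Sum>j<n. norm x * \<bar>a j\<bar>) \<le> norm x * (\<Sum>j. \<bar>a j\<bar>)"
      using sum_le_suminf[OF summable_mult[OF summable_a], of "{..<n}" "norm x"]
      by (simp add: suminf_mult[OF summable_a])
    finally show "norm (\<Prod>j<n. 1 - x * of_real (a j)) \<le> exp (norm x * (\<Sum>j. \<bar>a j\<bar>))"
      by simp
  qed
qed simp

lemma prod_one_minus_nonzero:
  fixes x :: "'a::{real_normed_field,banach}"
  assumes "\<And>j. x * of_real (a j) \<noteq> 1"
  shows "prod_one_minus a x \<noteq> 0"
  unfolding prod_one_minus_def using assms
  by (intro prodinf_nonzero[OF convergent_prod_one_minus]) (metis eq_iff_diff_eq_0)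

lemma of_real_prod_one_minus: "of_real (prod_one_minus a x) = (prod_one_minus a (of_real x) :: complex)"
proof -
  have "(\<lambda>n. \<Prod>j<n. 1 - x * a j) \<longlonglongrightarrow> prod_one_minus a x"
    using prod_one_minus_LIMSEQ[of x] by simp
  then have "(\<lambda>n. complex_of_real (\<Prod>j<n. 1 - x * a j)) \<longlonglongrightarrow> of_real (prod_one_minus a x)"
    by (rule tendsto_of_real)
  then show ?thesis
    using prod_one_minus_LIMSEQ[of "complex_of_real x"] LIMSEQ_unique by force
qed

end

section \<open>\<open>q\<close>-Pochhammer symbols and the reciprocal \<open>q\<close>-Gamma function\<close>

lemma summable_abs_power: "0 \<le> Q \<Longrightarrow> Q < (1::real) \<Longrightarrow> summable (\<lambda>j. \<bar>Q ^ j\<bar>)"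
  by (simp add: summable_geometric)

lemma qpoch_inf_eq_prod_one_minus: "qpoch_inf x Q = prod_one_minus (\<lambda>j. Q ^ j) x"
  by (simp add: qpoch_inf_def prod_one_minus_def)

lemma qpoch_Suc: "qpoch a Q (Suc k) = qpoch a Q k * (1 - a * Q ^ k)"
  by (simp add: qpoch_def)

lemma qpoch_pos:
  assumes "0 \<le> a" "a < 1" "0 \<le> Q" "Q \<le> 1"
  shows "qpoch a Q k > 0"
proof -
  have "a * Q ^ j < 1" for j
    using mult_left_le[OF power_le_one[of Q j] assms(1)] assms by simp
  then show ?thesis
    unfolding qpoch_def by (intro prod_pos) simp
qed

lemma qpoch_ge:
  assumes "0 \<le> Q" "Q < 1"
  shows "(1 - Q) ^ k \<le> qpoch Q Q k"
proof -
  have "1 - Q \<le> 1 - Q * Q ^ j" for j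
    using mult_left_le[OF power_le_one[of Q j]] assms by simp
  then have "(\<Prod>j<k. 1 - Q) \<le> (\<Prod>j<k. 1 - Q * Q ^ j)"
    using assms by (intro prod_mono) simp
  then show ?thesis
    by (simp add: qpoch_def)
qed

context
  fixes Q :: real
  assumes Q: "0 \<le> Q" "Q < 1"
begin

lemma qpoch_inf_shift: "qpoch_inf a Q = (1 - a) * qpoch_inf (a * Q) Q"
proof -
  have "convergent_prod (\<lambda>j. 1 - a * Q ^ Suc j)"
    using convergent_prod_one_minus[OF summable_abs_power[OF Q], of a]
      convergent_prod_Suc_iff[of "\<lambda>j. 1 - a * Q ^ j"] by simp
  then have "(\<lambda>j. 1 - a * Q ^ Suc j) has_prod qpoch_inf (a * Q) Q"
    unfolding qpoch_inf_def by (simp add: convergent_prod_has_prod mult_ac)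
  then have "(\<lambda>j. 1 - a * Q ^ j) has_prod (qpoch_inf (a * Q) Q * (1 - a))"
    using has_prod_Suc_imp[of "\<lambda>j. 1 - a * Q ^ j"] by simp
  then show ?thesis
    unfolding qpoch_inf_def[of a] by (simp add: has_prod_unique[symmetric] mult_ac)
qed

lemma qpoch_inf_split: "qpoch_inf a Q = qpoch a Q m * qpoch_inf (a * Q ^ m) Q"
proof (induction m)
  case (Suc m)
  then show ?case
    using qpoch_inf_shift[of "a * Q ^ m"] by (simp add: qpoch_Suc mult_ac)
qed (simp add: qpoch_def)

lemma qpoch_inf_eq_0: "a * Q ^ m = 1 \<Longrightarrow> qpoch_inf a Q = 0"
  using qpoch_inf_split[of a "Suc m"] by (simp add: qpoch_Suc)

lemma qpoch_inf_nonzero: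
  assumes "0 \<le> a" "a < 1"
  shows "qpoch_inf a Q \<noteq> 0"
proof -
  have "a * Q ^ j < 1" for j
    using mult_left_le[OF power_le_one[of Q j] assms(1)] Q assms(2) by simp
  then show ?thesis
    unfolding qpoch_inf_eq_prod_one_minus
    by (intro prod_one_minus_nonzero[OF summable_abs_power[OF Q]]) (simp add: less_imp_neq)
qed

lemma isCont_qpoch_inf: "isCont (\<lambda>a. qpoch_inf a Q) a"
  unfolding qpoch_inf_eq_prod_one_minus
  by (rule isCont_prod_one_minus[OF summable_abs_power[OF Q]])

end

text \<open>Because \<open>x / 0 = 0\<close>, the reciprocal of \<open>qGamma\<close> is given by the entire expression
  \<open>(Q\<^sup>x;Q)\<^sub>\<infinity> (1 - Q)\<^sup>x\<^sup>-\<^sup>1 / (Q;Q)\<^sub>\<infinity>\<close> everywhere, including the poles \<open>x = 0, -1, -2, \<dots>\<close>,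
  where it vanishes.\<close>

definition rqGamma :: "real \<Rightarrow> real \<Rightarrow> real" where
  "rqGamma Q x = inverse (qGamma Q x)"

context
  fixes Q :: real
  assumes Q: "0 < Q" "Q < 1"
begin

lemma rqGamma_eq: "rqGamma Q x = qpoch_inf (Q powr x) Q / qpoch_inf Q Q * (1 - Q) powr (x - 1)"
proof -
  have "(1 - Q) powr (1 - x) * (1 - Q) powr (x - 1) = 1"
    using Q by (simp flip: powr_add)
  then show ?thesis
    using qpoch_inf_nonzero[of Q Q] Q by (simp add: rqGamma_def qGamma_def field_simps)
qed

lemma rqGamma_rec: "rqGamma Q x = (1 - Q powr x) / (1 - Q) * rqGamma Q (x + 1)"
  using qpoch_inf_shift[of Q "Q powr x"] Q
  by (simp add: rqGamma_eq powr_add powr_diff mult_ac)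

lemma rqGamma_of_nat_plus_1: "rqGamma Q (real N + 1) = (1 - Q) ^ N / qpoch Q Q N"
proof (induction N)
  case 0
  show ?case
    using qpoch_inf_nonzero[of Q Q] Q by (simp add: rqGamma_eq qpoch_def)
next
  case (Suc N)
  have "Q powr (real N + 1) = Q ^ Suc N"
    using powr_realpow[of Q "Suc N"] Q by (simp add: add.commute)
  then have rec: "rqGamma Q (real N + 1) = (1 - Q ^ Suc N) / (1 - Q) * rqGamma Q (real (Suc N) + 1)"
    using rqGamma_rec[of "real N + 1"] by (simp add: add_ac)
  have "Q ^ Suc N < 1"
    using Q by (intro power_Suc_less_one) auto
  then have "rqGamma Q (real (Suc N) + 1) = rqGamma Q (real N + 1) * (1 - Q) / (1 - Q ^ Suc N)"
    using rec Q by (simp add: field_simps)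
  also have "\<dots> = (1 - Q) ^ Suc N / qpoch Q Q (Suc N)"
    unfolding Suc.IH qpoch_Suc using \<open>Q ^ Suc N < 1\<close> qpoch_pos[of Q Q N] Q
    by (simp add: field_simps)
  finally show ?case .
qed

lemma rqGamma_neg_nat: "rqGamma Q (- real i) = 0"
  using qpoch_inf_eq_0[of Q "Q powr (- real i)" i] Q
  by (simp add: rqGamma_eq powr_minus powr_realpow)

end

definition I3_coeff :: "real \<Rightarrow> real \<Rightarrow> nat \<Rightarrow> real" where
  "I3_coeff q \<nu> k = q powr (real k * (\<nu> + real k)) * (1 - q^2) ^ k
      / (qpoch (q^2) (q^2) k * qGamma (q^2) (\<nu> + real k + 1))"

lemma I3_eq_suminf_coeff:
  "I3 q \<nu> z = (\<Sum>k. of_real (I3_coeff q \<nu> k) * (z / 2) powr of_real (\<nu> + 2 * real k))"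
  by (simp add: I3_def I3_coeff_def)

lemma I3_coeff_eq:
  "I3_coeff q \<nu> k = q powr (real k * (\<nu> + real k)) * (1 - q^2) ^ k
      * rqGamma (q^2) (\<nu> + real k + 1) / qpoch (q^2) (q^2) k"
  by (simp add: I3_coeff_def rqGamma_def divide_inverse mult_ac)

definition pred_weight :: "real \<Rightarrow> real \<Rightarrow> nat \<Rightarrow> real" where
  "pred_weight q \<nu> k = (1 - (q^2) powr (\<nu> + real k)) / (q ^ k * (1 - q^2))"

definition succ_weight :: "real \<Rightarrow> real \<Rightarrow> nat \<Rightarrow> real" where
  "succ_weight q \<nu> k = (1 - (q^2) ^ k) / (q powr (\<nu> + real k) * (1 - q^2))"

context
  fixes q :: real
  assumes q: "0 < q" "q < 1"
begin

lemma q_squared: "0 < q^2" "q^2 < 1"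
  using q by (auto simp: power_less_one_iff)

lemma I3_coeff_pred: "I3_coeff q (\<nu> - 1) k = pred_weight q \<nu> k * I3_coeff q \<nu> k"
proof -
  have "real k * (\<nu> - 1 + real k) = real k * (\<nu> + real k) - real k"
    by (simp add: algebra_simps)
  then have "q powr (real k * (\<nu> - 1 + real k)) = q powr (real k * (\<nu> + real k)) / q ^ k"
    using q by (simp add: powr_diff powr_realpow)
  moreover have "rqGamma (q^2) (\<nu> - 1 + real k + 1)
                 = (1 - (q^2) powr (\<nu> + real k)) / (1 - q^2) * rqGamma (q^2) (\<nu> + real k + 1)"
    using rqGamma_rec[OF q_squared, of "\<nu> + real k"] by simp
  ultimately show ?thesis
    unfolding I3_coeff_eq pred_weight_def by (simp add: field_simps)
qed

lemma I3_coeff_succ: "I3_coeff q (\<nu> + 1) k = succ_weight q \<nu> (Suc k) * I3_coeff q \<nu> (Suc k)"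
proof -
  define P where "P = q powr (real k * (\<nu> + 1 + real k))"
  define G where "G = rqGamma (q^2) (\<nu> + 1 + real k + 1)"
  define E where "E = 1 - q^2"
  define D where "D = 1 - (q^2) ^ Suc k"
  define p where "p = qpoch (q^2) (q^2) k"
  have "real (Suc k) * (\<nu> + real (Suc k)) = real k * (\<nu> + 1 + real k) + (\<nu> + real (Suc k))"
    by (simp add: algebra_simps)
  then have succ: "I3_coeff q \<nu> (Suc k) = P * q powr (\<nu> + real (Suc k)) * (E ^ k * E) * G / (p * D)"
    unfolding I3_coeff_eq P_def G_def E_def D_def p_def by (simp add: powr_add qpoch_Suc add_ac mult_ac)
  have shifted: "I3_coeff q (\<nu> + 1) k = P * E ^ k * G / p"
    unfolding I3_coeff_eq P_def G_def E_def p_def by (simp add: add_ac)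
  have "D \<noteq> 0"
    using power_Suc_less_one[of "q^2" k] q_squared by (simp add: D_def)
  moreover have "p \<noteq> 0" "E \<noteq> 0"
    using qpoch_pos[of "q^2" "q^2" k] q_squared by (auto simp: p_def E_def)
  ultimately show ?thesis
    unfolding succ shifted succ_weight_def D_def[symmetric] E_def[symmetric] using q by (simp add: field_simps)
qed

lemma I3_coeff_neg_nat_eq_0:
  assumes "k < m"
  shows "I3_coeff q (- real m) k = 0"
proof -
  have "- real m + real k + 1 = - real (m - k - 1)"
    using assms by (simp add: of_nat_diff)
  then show ?thesis
    using rqGamma_neg_nat[OF q_squared, of "m - k - 1"] by (simp add: I3_coeff_eq)
qed

lemma I3_coeff_neg_nat_shift: "I3_coeff q (- real m) (k + m) = I3_coeff q (real m) k"
proof -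
  have "real (k + m) * (- real m + real (k + m)) = real k * (real m + real k)"
    by (simp add: algebra_simps)
  moreover have "qpoch (q^2) (q^2) k > 0" "qpoch (q^2) (q^2) (m + k) > 0"
    using q_squared by (auto intro: qpoch_pos)
  ultimately show ?thesis
    unfolding I3_coeff_eq using rqGamma_of_nat_plus_1[OF q_squared, of k] rqGamma_of_nat_plus_1[OF q_squared, of "m + k"]
    by (simp add: add.commute power_add field_simps)
qed

end

section \<open>Analytic continuation of \<open>I3\<close> in the order\<close>

lemma summable_partial_theta:
  fixes q c :: real
  assumes "0 \<le> q" "q < 1"
  shows "summable (\<lambda>k. (q ^ k * c) ^ k)"
proof -
  have "(\<lambda>k. q ^ k * \<bar>c\<bar>) \<longlonglongrightarrow> 0 * \<bar>c\<bar>"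
    using assms by (intro tendsto_mult LIMSEQ_power_zero tendsto_const) auto
  then have "\<forall>\<^sub>F k in sequentially. q ^ k * \<bar>c\<bar> < 1/2"
    by (intro order_tendstoD) auto
  then have "\<forall>\<^sub>F k in sequentially. norm ((q ^ k * c) ^ k) \<le> (1/2) ^ k"
  proof eventually_elim
    case (elim k)
    have "norm ((q ^ k * c) ^ k) = (q ^ k * \<bar>c\<bar>) ^ k"
      using assms by (simp add: power_abs abs_mult)
    also have "\<dots> \<le> (1/2) ^ k"
      using elim assms by (intro power_mono) auto
    finally show ?case .
  qed
  then show ?thesis
    by (rule summable_comparison_test_ev) (simp add: summable_geometric)
qed

text \<open>The \<open>k\<close>-th summand of \<open>I3\<close> divided by \<open>(z/2)\<^sup>\<nu>\<close>, with \<open>1/\<Gamma>\<close> written as in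
  \<open>rqGamma_eq\<close> so that it is an entire function of the order \<open>s\<close>; \<open>w\<close> stands for \<open>z/2\<close>.\<close>

definition I3_term :: "real \<Rightarrow> complex \<Rightarrow> complex \<Rightarrow> nat \<Rightarrow> complex" where
  "I3_term q w s k = of_real ((1 - q^2) ^ k / (qpoch (q^2) (q^2) k * qpoch_inf (q^2) (q^2)))
      * of_real q powr (of_nat k * (s + of_nat k))
      * prod_one_minus (\<lambda>j. (q^2) ^ j) (of_real (q^2) powr (s + of_nat k + 1))
      * of_real (1 - q^2) powr (s + of_nat k)
      * w ^ (2 * k)"

definition I3_entire :: "real \<Rightarrow> complex \<Rightarrow> complex \<Rightarrow> complex" where
  "I3_entire q w s = (\<Sum>k. I3_term q w s k)"

context
  fixes q :: real
  assumes q: "0 < q" "q < 1"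
begin

lemma I3_term_of_real: "I3_term q w (of_real \<nu>) k = of_real (I3_coeff q \<nu> k) * w ^ (2 * k)"
proof -
  have exponents: "of_real \<nu> + of_nat k = (of_real (\<nu> + real k) :: complex)"
    "of_nat k * of_real (\<nu> + real k) = (of_real (real k * (\<nu> + real k)) :: complex)"
    "of_real (\<nu> + real k) + 1 = (of_real (\<nu> + real k + 1) :: complex)"
    by simp_all
  have "0 \<le> q" "0 \<le> q^2" "0 \<le> 1 - q^2"
    using q q_squared[OF q] by simp_all
  note powr = this[THEN powr_of_real]
  have "I3_term q w (of_real \<nu>) k
        = of_real ((1 - q^2) ^ k / (qpoch (q^2) (q^2) k * qpoch_inf (q^2) (q^2))
            * q powr (real k * (\<nu> + real k)) * qpoch_inf ((q^2) powr (\<nu> + real k + 1)) (q^2)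
            * (1 - q^2) powr (\<nu> + real k)) * w ^ (2 * k)"
    unfolding I3_term_def exponents powr
    by (simp add: qpoch_inf_eq_prod_one_minus
          of_real_prod_one_minus[OF summable_abs_power[OF \<open>0 \<le> q^2\<close> q_squared(2)[OF q]]])
  also have "\<dots> = of_real (I3_coeff q \<nu> k) * w ^ (2 * k)"
    unfolding I3_coeff_eq rqGamma_eq[OF q_squared[OF q]] by (simp add: mult_ac)
  finally show ?thesis .
qed

lemma holomorphic_I3_term: "(\<lambda>s. I3_term q w s k) holomorphic_on UNIV"
proof -
  have "prod_one_minus (\<lambda>j. (q^2) ^ j) \<circ> (\<lambda>s. of_real (q^2) powr (s + of_nat k + 1))
          holomorphic_on UNIV"
    using q_squared[OF q]
    by (intro holomorphic_on_compose holomorphic_intros)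
       (auto intro: holomorphic_on_subset[OF holomorphic_prod_one_minus] summable_abs_power)
  then show ?thesis
    unfolding I3_term_def o_def by (intro holomorphic_intros)
qed

lemma I3_term_bound:
  obtains C where "\<And>s k. norm s \<le> R \<Longrightarrow> norm (I3_term q w s k) \<le> C * (q ^ k * q powr (- R) * (norm w)^2) ^ k"
proof
  fix s :: complex and k :: nat
  assume s: "norm s \<le> R"
  define Q where "Q = q^2"
  have Q: "0 < Q" "Q < 1"
    using q_squared[OF q] by (simp_all add: Q_def)
  have Re_s: "- R \<le> Re s"
    using s abs_Re_le_cmod[of s] by linarith
  have norm_powr: "norm (of_real a powr z) = a powr Re z" if "0 \<le> a" for a and z :: complex
    using that by (simp add: norm_powr_real_powr)
  have "(1 - Q) ^ k / qpoch Q Q k \<le> 1"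
    using qpoch_ge[of Q k] qpoch_pos[of Q Q k] Q by simp
  then have bound1: "\<bar>(1 - Q) ^ k / (qpoch Q Q k * qpoch_inf Q Q)\<bar> \<le> 1 / \<bar>qpoch_inf Q Q\<bar>"
    using qpoch_pos[of Q Q k] Q
    by (simp add: abs_mult divide_right_mono flip: divide_divide_eq_left)
  have bound2: "q powr (real k * (Re s + real k)) \<le> (q ^ k * q powr (- R)) ^ k"
  proof -
    have "q powr (real k * (Re s + real k)) \<le> q powr (real k * (real k - R))"
      using Re_s q by (intro powr_mono') (auto intro: mult_left_mono)
    also have "\<dots> = (q powr (real k - R)) powr real k"
      by (simp add: powr_powr algebra_simps)
    also have "\<dots> = (q ^ k * q powr (- R)) ^ k"
      using q by (simp add: powr_realpow powr_diff powr_minus divide_inverse)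
    finally show ?thesis .
  qed
  have bound3: "norm (prod_one_minus (\<lambda>j. Q ^ j) (of_real Q powr (s + of_nat k + 1)))
                \<le> exp (Q powr (- R) / (1 - Q))"
  proof -
    have "Q powr (Re s + real k + 1) \<le> Q powr (- R)"
      using Re_s Q by (intro powr_mono') auto
    then show ?thesis
      using norm_prod_one_minus_le[OF summable_abs_power, of Q "of_real Q powr (s + of_nat k + 1)"] Q
      by (simp add: norm_powr suminf_geometric divide_right_mono order_trans)
  qed
  have bound4: "(1 - Q) powr (Re s + real k) \<le> (1 - Q) powr (- R)"
    using Re_s Q by (intro powr_mono') auto
  have "norm (I3_term q w s k)
        = \<bar>(1 - Q) ^ k / (qpoch Q Q k * qpoch_inf Q Q)\<bar> * q powr (real k * (Re s + real k))
          * norm (prod_one_minus (\<lambda>j. Q ^ j) (of_real Q powr (s + of_nat k + 1)))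
          * (1 - Q) powr (Re s + real k) * ((norm w)^2) ^ k"
    unfolding I3_term_def Q_def[symmetric] norm_mult norm_of_real norm_power
    using Q q norm_powr[of "1 - Q"] by (simp add: norm_powr power_mult)
  also have "\<dots> \<le> 1 / \<bar>qpoch_inf Q Q\<bar> * (q ^ k * q powr (- R)) ^ k * exp (Q powr (- R) / (1 - Q))
                   * (1 - Q) powr (- R) * ((norm w)^2) ^ k"
    using bound1 bound2 bound3 bound4 q by (intro mult_mono mult_right_mono) auto
  finally show "norm (I3_term q w s k)
      \<le> (1 / \<bar>qpoch_inf Q Q\<bar> * exp (Q powr (- R) / (1 - Q)) * (1 - Q) powr (- R))
        * (q ^ k * q powr (- R) * (norm w)^2) ^ k"
    by (simp add: power_mult_distrib mult_ac)
qed

lemma uniform_limit_I3_entire: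
  "uniform_limit (cball x d) (\<lambda>n s. \<Sum>k<n. I3_term q w s k) (I3_entire q w) sequentially"
proof -
  define R where "R = norm x + d"
  obtain C where C: "\<And>s k. norm s \<le> R \<Longrightarrow> norm (I3_term q w s k) \<le> C * (q ^ k * q powr (- R) * (norm w)^2) ^ k"
    using I3_term_bound[where R = R and w = w] by blast
  have "norm s \<le> R" if "s \<in> cball x d" for s
    using that norm_triangle_sub[of s x] by (simp add: R_def dist_norm norm_minus_commute)
  then show ?thesis
    unfolding I3_entire_def
    by (intro Weierstrass_m_test_ev[where M = "\<lambda>k. C * (q ^ k * (q powr (- R) * (norm w)^2)) ^ k"]
          always_eventually summable_mult summable_partial_theta)
       (use q C in \<open>auto simp: mult_ac\<close>)
qed

lemma holomorphic_I3_entire: "I3_entire q w holomorphic_on UNIV"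
  by (rule holomorphic_uniform_sequence[OF _ holomorphic_on_sum[OF holomorphic_I3_term]])
     (auto intro!: exI[of _ 1] uniform_limit_I3_entire)

lemma I3_entire_sums: "(\<lambda>k. I3_term q w s k) sums I3_entire q w s"
proof -
  obtain C where C: "\<And>k. norm (I3_term q w s k) \<le> C * (q ^ k * (q powr (- norm s) * (norm w)^2)) ^ k"
    using I3_term_bound[where R = "norm s" and w = w] by (metis order_refl mult.assoc)
  have "summable (\<lambda>k. I3_term q w s k)"
    by (rule summable_norm_cancel, rule summable_comparison_test[OF _ summable_mult[OF summable_partial_theta]])
       (use q C in auto)
  then show ?thesis
    unfolding I3_entire_def by (rule summable_sums)
qed

lemma I3_series_sums_entire:
  assumes "z \<noteq> 0"
  shows "(\<lambda>k. of_real (I3_coeff q \<nu> k) * (z / 2) powr of_real (\<nu> + 2 * real k))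
           sums ((z / 2) powr of_real \<nu> * I3_entire q (z / 2) (of_real \<nu>))"
proof -
  have "(z / 2) powr of_real (\<nu> + 2 * real k) = (z / 2) powr of_real \<nu> * (z / 2) ^ (2 * k)" for k
    using assms powr_nat'[of "z / 2" "2 * k"] by (simp add: powr_add)
  then show ?thesis
    using sums_mult[OF I3_entire_sums, of "(z / 2) powr of_real \<nu>" "z / 2" "of_real \<nu>"]
    by (simp add: I3_term_of_real mult_ac)
qed

lemma I3_eq_I3_entire:
  "z \<noteq> 0 \<Longrightarrow> I3 q \<nu> z = (z / 2) powr of_real \<nu> * I3_entire q (z / 2) (of_real \<nu>)"
  unfolding I3_eq_suminf_coeff using I3_series_sums_entire by (rule sums_unique[symmetric])

lemma I3_sums:
  "z \<noteq> 0 \<Longrightarrow> (\<lambda>k. of_real (I3_coeff q \<nu> k) * (z / 2) powr of_real (\<nu> + 2 * real k)) sums I3 q \<nu> z"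
  using I3_series_sums_entire I3_eq_I3_entire by simp

end

section \<open>Contiguous relations for \<open>I3\<close> and \<open>K3_form\<close>\<close>

lemma sums_linear_combination_eq:
  fixes t :: "nat \<Rightarrow> 'a::real_normed_field"
  assumes "(\<lambda>k. of_real (a k) * t k) sums A" "(\<lambda>k. of_real (b k) * t k) sums B"
    and "(\<lambda>k. of_real (c k) * t k) sums C" "(\<lambda>k. of_real (d k) * t k) sums D"
    and "\<And>k. \<alpha> * a k + \<beta> * b k = \<gamma> * c k + \<delta> * d k"
  shows "of_real \<alpha> * A + of_real \<beta> * B = of_real \<gamma> * C + of_real \<delta> * D"
proof -
  have "(\<lambda>k. of_real (\<alpha> * a k + \<beta> * b k) * t k) sums (of_real \<alpha> * A + of_real \<beta> * B)"
    using sums_add[OF sums_mult[OF assms(1), of "of_real \<alpha>"] sums_mult[OF assms(2), of "of_real \<beta>"]]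
    by (simp add: algebra_simps)
  moreover have "(\<lambda>k. of_real (\<gamma> * c k + \<delta> * d k) * t k) sums (of_real \<gamma> * C + of_real \<delta> * D)"
    using sums_add[OF sums_mult[OF assms(3), of "of_real \<gamma>"] sums_mult[OF assms(4), of "of_real \<delta>"]]
    by (simp add: algebra_simps)
  ultimately show ?thesis
    unfolding assms(5) by (rule sums_unique2)
qed

context
  fixes q :: real
  assumes q: "0 < q" "q < 1"
begin

lemma pred_succ_weight_combinations:
  "q powr (- \<nu> / 2) * pred_weight q \<nu> k - q powr (\<nu> / 2) * succ_weight q \<nu> k
     = (q powr (- \<nu>) - q powr \<nu>) / (1 - q^2) * (q powr (1/2)) powr (\<nu> + 2 * real k)"
  "q powr (- \<nu> / 2) * pred_weight q \<nu> k + q powr (\<nu> / 2) * succ_weight q \<nu> k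
     = 2 / (1 - q^2) * (q powr (- 1/2)) powr (\<nu> + 2 * real k)
       - (q powr (- \<nu>) + q powr \<nu>) / (1 - q^2) * (q powr (1/2)) powr (\<nu> + 2 * real k)"
proof -
  define h where "h = q powr (\<nu> / 2)"
  define x where "x = q ^ k"
  define E where "E = 1 - q^2"
  have "h > 0" "x > 0" "E \<noteq> 0"
    using q q_squared[OF q] by (simp_all add: h_def x_def E_def)
  have sq: "q powr \<nu> = h^2"
    using powr_add[of q "\<nu>/2" "\<nu>/2"] by (simp add: h_def power2_eq_square)
  have qk: "q powr real k = x"
    using q by (simp add: x_def powr_realpow)
  have neg: "q powr (- \<nu> / 2) = 1 / h" "q powr (- \<nu>) = 1 / h^2" "(q^2) ^ k = x^2"
    by (simp_all add: h_def x_def powr_minus_divide sq power_mult[symmetric] mult.commute)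
  have shifted: "q powr (\<nu> + real k) = h^2 * x"
    by (simp add: powr_add sq qk)
  have shifted_sq: "(q^2) powr (\<nu> + real k) = h^4 * x^2"
    using q by (simp add: power2_eq_square powr_mult shifted[unfolded power2_eq_square] power4_eq_xxxx mult_ac)
  have half: "(q powr (1/2)) powr (\<nu> + 2 * real k) = h * x"
    using q by (simp add: powr_powr powr_add qk[symmetric] h_def field_simps)
  have neg_half: "(q powr (- 1/2)) powr (\<nu> + 2 * real k) = 1 / (h * x)"
    using half powr_minus_divide[of q "1/2"] by (simp add: powr_divide)
  show
    "q powr (- \<nu> / 2) * pred_weight q \<nu> k - q powr (\<nu> / 2) * succ_weight q \<nu> k
       = (q powr (- \<nu>) - q powr \<nu>) / (1 - q^2) * (q powr (1/2)) powr (\<nu> + 2 * real k)"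
    "q powr (- \<nu> / 2) * pred_weight q \<nu> k + q powr (\<nu> / 2) * succ_weight q \<nu> k
       = 2 / (1 - q^2) * (q powr (- 1/2)) powr (\<nu> + 2 * real k)
         - (q powr (- \<nu>) + q powr \<nu>) / (1 - q^2) * (q powr (1/2)) powr (\<nu> + 2 * real k)"
    unfolding pred_weight_def succ_weight_def neg shifted shifted_sq half neg_half sq
      h_def[symmetric] x_def[symmetric] E_def[symmetric]
    using \<open>h > 0\<close> \<open>x > 0\<close> \<open>E \<noteq> 0\<close>
    by (simp_all add: field_simps power2_eq_square power4_eq_xxxx)
qed

lemma I3_scaled_sums:
  assumes "z \<noteq> 0" "0 < r"
  shows "(\<lambda>k. of_real (r powr (\<nu> + 2 * real k))
              * (of_real (I3_coeff q \<nu> k) * (z / 2) powr of_real (\<nu> + 2 * real k)))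
           sums I3 q \<nu> (of_real r * z)"
proof -
  have "(of_real r * z / 2) powr of_real y = of_real (r powr y) * (z / 2) powr of_real y" for y
    using assms(2) powr_times_real_left[of "of_real r" "z / 2" "of_real y"] by (simp add: powr_of_real)
  then show ?thesis
    using I3_sums[OF q, where z = "of_real r * z" and \<nu> = \<nu>] assms by (simp only: mult_ac) simp
qed

lemma I3_pred_sums:
  assumes "z \<noteq> 0"
  shows "(\<lambda>k. of_real (pred_weight q \<nu> k)
              * (of_real (I3_coeff q \<nu> k) * (z / 2) powr of_real (\<nu> + 2 * real k)))
           sums (z / 2 * I3 q (\<nu> - 1) z)"
proof -
  have "z / 2 * (of_real (I3_coeff q (\<nu> - 1) k) * (z / 2) powr of_real (\<nu> - 1 + 2 * real k))
        = of_real (pred_weight q \<nu> k) * (of_real (I3_coeff q \<nu> k) * (z / 2) powr of_real (\<nu> + 2 * real k))"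
    for k
    using powr_add[of "z / 2" "of_real (\<nu> - 1 + 2 * real k)" 1]
    by (simp add: I3_coeff_pred[OF q] mult_ac)
  then show ?thesis
    using sums_mult[OF I3_sums[OF q assms, where \<nu> = "\<nu> - 1"], of "z / 2"] by simp
qed

lemma I3_succ_sums:
  assumes "z \<noteq> 0"
  shows "(\<lambda>k. of_real (succ_weight q \<nu> k)
              * (of_real (I3_coeff q \<nu> k) * (z / 2) powr of_real (\<nu> + 2 * real k)))
           sums (z / 2 * I3 q (\<nu> + 1) z)"
proof -
  have "z / 2 * (of_real (I3_coeff q (\<nu> + 1) k) * (z / 2) powr of_real (\<nu> + 1 + 2 * real k))
        = of_real (succ_weight q \<nu> (Suc k))
          * (of_real (I3_coeff q \<nu> (Suc k)) * (z / 2) powr of_real (\<nu> + 2 * real (Suc k)))"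
    for k
  proof -
    have "(z / 2) powr of_real (\<nu> + 2 * real (Suc k))
          = (z / 2) powr of_real (\<nu> + 1 + 2 * real k) * (z / 2)"
      using powr_add[of "z / 2" "of_real (\<nu> + 1 + 2 * real k)" 1] by (simp add: add_ac)
    then show ?thesis
      unfolding I3_coeff_succ[OF q] by (simp add: mult_ac)
  qed
  then have "(\<lambda>k. of_real (succ_weight q \<nu> (Suc k))
              * (of_real (I3_coeff q \<nu> (Suc k)) * (z / 2) powr of_real (\<nu> + 2 * real (Suc k))))
           sums (z / 2 * I3 q (\<nu> + 1) z)"
    using sums_mult[OF I3_sums[OF q assms, where \<nu> = "\<nu> + 1"], of "z / 2"] by simp
  then show ?thesis
    by (subst (asm) sums_Suc_iff) (simp add: succ_weight_def)
qed

lemma I3_recurrence_diff: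
  assumes "z \<noteq> 0"
  shows "of_real (q powr (- \<nu> / 2)) * I3 q (\<nu> - 1) z - of_real (q powr (\<nu> / 2)) * I3 q (\<nu> + 1) z
           = 2 / (of_real (1 - q^2) * z) * of_real (q powr (- \<nu>) - q powr \<nu>)
             * I3 q \<nu> (of_real (q powr (1/2)) * z)"
proof -
  have half: "0 < q powr (1/2)"
    using q by simp
  have "of_real (q powr (- \<nu> / 2)) * (z / 2 * I3 q (\<nu> - 1) z)
          + of_real (- (q powr (\<nu> / 2))) * (z / 2 * I3 q (\<nu> + 1) z)
        = of_real ((q powr (- \<nu>) - q powr \<nu>) / (1 - q^2)) * I3 q \<nu> (of_real (q powr (1/2)) * z)
          + of_real 0 * I3 q \<nu> (of_real (q powr (1/2)) * z)"
    by (rule sums_linear_combination_eq[OF I3_pred_sums[OF assms] I3_succ_sums[OF assms]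
          I3_scaled_sums[OF assms half] I3_scaled_sums[OF assms half]])
       (use pred_succ_weight_combinations(1) in simp)
  then have "(of_real (q powr (- \<nu> / 2)) * I3 q (\<nu> - 1) z - of_real (q powr (\<nu> / 2)) * I3 q (\<nu> + 1) z) * (z / 2)
             = of_real ((q powr (- \<nu>) - q powr \<nu>) / (1 - q^2)) * I3 q \<nu> (of_real (q powr (1/2)) * z)"
    by (simp add: algebra_simps)
  then have "of_real (q powr (- \<nu> / 2)) * I3 q (\<nu> - 1) z - of_real (q powr (\<nu> / 2)) * I3 q (\<nu> + 1) z
             = of_real ((q powr (- \<nu>) - q powr \<nu>) / (1 - q^2)) * I3 q \<nu> (of_real (q powr (1/2)) * z) / (z / 2)"
    by (rule eq_divide_imp[rotated]) (use assms in simp)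
  then show ?thesis
    by simp
qed

lemma I3_recurrence_sum:
  assumes "z \<noteq> 0"
  shows "of_real (q powr (- \<nu> / 2)) * I3 q (\<nu> - 1) z + of_real (q powr (\<nu> / 2)) * I3 q (\<nu> + 1) z
           = 4 / (of_real (1 - q^2) * z) * I3 q \<nu> (of_real (q powr (- 1/2)) * z)
             - 2 / (of_real (1 - q^2) * z) * of_real (q powr (- \<nu>) + q powr \<nu>)
               * I3 q \<nu> (of_real (q powr (1/2)) * z)"
proof -
  have half: "0 < q powr (1/2)" "0 < q powr (- 1/2)"
    using q by simp_all
  have "of_real (q powr (- \<nu> / 2)) * (z / 2 * I3 q (\<nu> - 1) z)
          + of_real (q powr (\<nu> / 2)) * (z / 2 * I3 q (\<nu> + 1) z)
        = of_real (2 / (1 - q^2)) * I3 q \<nu> (of_real (q powr (- 1/2)) * z)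
          + of_real (- ((q powr (- \<nu>) + q powr \<nu>) / (1 - q^2))) * I3 q \<nu> (of_real (q powr (1/2)) * z)"
    by (rule sums_linear_combination_eq[OF I3_pred_sums[OF assms] I3_succ_sums[OF assms]
          I3_scaled_sums[OF assms half(2)] I3_scaled_sums[OF assms half(1)]])
       (use pred_succ_weight_combinations(2) in simp)
  then have "(of_real (q powr (- \<nu> / 2)) * I3 q (\<nu> - 1) z + of_real (q powr (\<nu> / 2)) * I3 q (\<nu> + 1) z) * (z / 2)
             = of_real (2 / (1 - q^2)) * I3 q \<nu> (of_real (q powr (- 1/2)) * z)
               - of_real ((q powr (- \<nu>) + q powr \<nu>) / (1 - q^2)) * I3 q \<nu> (of_real (q powr (1/2)) * z)"
    by (simp add: algebra_simps)
  then have "of_real (q powr (- \<nu> / 2)) * I3 q (\<nu> - 1) z + of_real (q powr (\<nu> / 2)) * I3 q (\<nu> + 1) z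
             = (of_real (2 / (1 - q^2)) * I3 q \<nu> (of_real (q powr (- 1/2)) * z)
                - of_real ((q powr (- \<nu>) + q powr \<nu>) / (1 - q^2)) * I3 q \<nu> (of_real (q powr (1/2)) * z))
               / (z / 2)"
    by (rule eq_divide_imp[rotated]) (use assms in simp)
  also have "\<dots> = 4 / (of_real (1 - q^2) * z) * I3 q \<nu> (of_real (q powr (- 1/2)) * z)
                   - 2 / (of_real (1 - q^2) * z) * of_real (q powr (- \<nu>) + q powr \<nu>)
                     * I3 q \<nu> (of_real (q powr (1/2)) * z)"
  proof -
    have regroup: "(of_real (2 / E) * X - of_real (c / E) * Y) / (z / 2)
          = 4 / (of_real E * z) * X - 2 / (of_real E * z) * of_real c * Y"
      if "E \<noteq> 0" for E c :: real and X Y :: complex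
      using that assms by (simp add: field_simps)
    show ?thesis
      by (rule regroup) (use q_squared[OF q] in simp)
  qed
  finally show ?thesis .
qed

end

definition K3_factor :: "real \<Rightarrow> real \<Rightarrow> real" where
  "K3_factor q \<nu> = 1/2 * q powr (- (\<nu>^2) + \<nu>) * qGamma (q^2) \<nu> * qGamma (q^2) (1 - \<nu>)"

lemma K3_form_eq: "K3_form q \<nu> z = of_real (K3_factor q \<nu>) * (I3 q (- \<nu>) z - I3 q \<nu> z)"
  by (simp add: K3_form_def K3_factor_def)

lemma qGamma_rec:
  assumes "0 < Q" "Q < 1"
  shows "qGamma Q x = (1 - Q) / (1 - Q powr x) * qGamma Q (x + 1)"
  using arg_cong[OF rqGamma_rec[OF assms, of x], of inverse]
  by (simp add: rqGamma_def inverse_mult_distrib divide_inverse mult_ac)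

lemma K3_factor_succ:
  assumes q: "0 < q" "q < 1" and "\<nu> \<noteq> 0"
  shows "K3_factor q (\<nu> + 1) = - K3_factor q \<nu>"
proof -
  define t where "t = (q^2) powr \<nu>"
  have "t > 0" "t \<noteq> 1" "1 - q^2 \<noteq> 0"
    using q q_squared[OF q] assms(3) by (auto simp: t_def powr_eq_one_iff_gen)
  have "q powr (- ((\<nu> + 1)^2) + (\<nu> + 1)) = q powr (- (\<nu>^2) + \<nu>) / t"
  proof -
    have "q powr (- ((\<nu> + 1)^2) + (\<nu> + 1)) = q powr ((- (\<nu>^2) + \<nu>) - 2 * \<nu>)"
      by (simp add: power2_eq_square algebra_simps)
    also have "\<dots> = q powr (- (\<nu>^2) + \<nu>) / q powr (2 * \<nu>)"
      by (rule powr_diff)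
    also have "q powr (2 * \<nu>) = t"
      using q by (simp add: t_def powr_powr[symmetric] powr_realpow)
    finally show ?thesis .
  qed
  moreover have "qGamma (q^2) (\<nu> + 1) = (1 - t) / (1 - q^2) * qGamma (q^2) \<nu>"
    using qGamma_rec[OF q_squared[OF q], of \<nu>] \<open>t \<noteq> 1\<close> \<open>1 - q^2 \<noteq> 0\<close> by (simp add: t_def)
  moreover have "qGamma (q^2) (1 - (\<nu> + 1)) = (1 - q^2) / (1 - 1 / t) * qGamma (q^2) (1 - \<nu>)"
    using qGamma_rec[OF q_squared[OF q], of "- \<nu>"] by (simp add: t_def powr_minus_divide)
  moreover have "1/2 * (P / t) * ((1 - t) / E * G) * (E / (1 - 1 / t) * G') = - (1/2 * P * G * G')"
    if "E \<noteq> 0" for P E G G' :: real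
    using that \<open>t > 0\<close> \<open>t \<noteq> 1\<close> by (simp add: field_simps)
  ultimately show ?thesis
    unfolding K3_factor_def using \<open>1 - q^2 \<noteq> 0\<close> by (simp only: mult.assoc)
qed

text \<open>The two identities of the theorem for an arbitrary family \<open>K\<close> in place of \<open>K3 q\<close>, so that
  they can be transported along limits in the order.\<close>

definition K_recurrences :: "real \<Rightarrow> (real \<Rightarrow> complex \<Rightarrow> complex) \<Rightarrow> real \<Rightarrow> complex \<Rightarrow> bool" where
  "K_recurrences q K \<nu> z \<longleftrightarrow>
     (complex_of_real (q powr (-\<nu>/2)) * K (\<nu> - 1) z
        - complex_of_real (q powr (\<nu>/2)) * K (\<nu> + 1) z
      = - (2 / (complex_of_real (1 - q^2) * z))
          * complex_of_real (q powr (-\<nu>) - q powr \<nu>)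
          * K \<nu> (complex_of_real (q powr (1/2)) * z)) \<and>
     (complex_of_real (q powr (-\<nu>/2)) * K (\<nu> - 1) z
        + complex_of_real (q powr (\<nu>/2)) * K (\<nu> + 1) z
      = - (4 / (complex_of_real (1 - q^2) * z))
          * K \<nu> (complex_of_real (q powr (-1/2)) * z)
        + (2 / (complex_of_real (1 - q^2) * z))
          * complex_of_real (q powr (-\<nu>) + q powr \<nu>)
          * K \<nu> (complex_of_real (q powr (1/2)) * z))"

lemma K_recurrences_K3_form:
  assumes q: "0 < q" "q < 1" and "z \<noteq> 0" "\<nu> \<noteq> 0" "\<nu> \<noteq> 1"
  shows "K_recurrences q (K3_form q) \<nu> z"
proof -
  have factor: "K3_factor q (\<nu> - 1) = - K3_factor q \<nu>" "K3_factor q (\<nu> + 1) = - K3_factor q \<nu>"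
    using K3_factor_succ[OF q, of "\<nu> - 1"] K3_factor_succ[OF q, of \<nu>] assms by simp_all
  have orders: "- (\<nu> - 1) = - \<nu> + 1" "- (\<nu> + 1) = - \<nu> - 1"
    by simp_all
  \<comment> \<open>each identity for \<open>K3_form\<close> is the difference of the \<open>I3\<close> identities at \<open>-\<nu>\<close> and \<open>\<nu>\<close>\<close>
  show ?thesis
    using I3_recurrence_diff[OF q \<open>z \<noteq> 0\<close>, of \<nu>] I3_recurrence_diff[OF q \<open>z \<noteq> 0\<close>, of "- \<nu>"]
      I3_recurrence_sum[OF q \<open>z \<noteq> 0\<close>, of \<nu>] I3_recurrence_sum[OF q \<open>z \<noteq> 0\<close>, of "- \<nu>"]
    unfolding K_recurrences_def K3_form_eq factor orders
    by (simp add: algebra_simps) algebra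
qed

section \<open>Integer orders\<close>

lemma filterlim_of_real_at: "filterlim complex_of_real (at (complex_of_real a)) (at a)"
  by (rule filterlim_atI) (auto intro!: tendsto_intros eventually_neq_at_within)

lemma filterlim_diff_left_at: "filterlim (\<lambda>x::real. c - x) (at (c - a)) (at a)"
  by (rule filterlim_atI) (auto intro!: tendsto_intros simp: eventually_at_filter)

lemma tendsto_one_minus_powr_div:
  fixes Q :: real
  assumes "0 < Q"
  shows "((\<lambda>x. (1 - Q powr x) / x) \<longlongrightarrow> - ln Q) (at 0)"
proof -
  have "((\<lambda>x. Q powr x) has_real_derivative ln Q) (at 0)"
    using assms by (auto intro!: derivative_eq_intros)
  then have "((\<lambda>x. (Q powr x - 1) / x) \<longlongrightarrow> ln Q) (at 0)"
    using assms by (simp add: has_field_derivative_iff)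
  then show ?thesis
    using tendsto_minus by (fastforce simp: minus_divide_left)
qed

context
  fixes q :: real
  assumes q: "0 < q" "q < 1"
begin

lemma I3_neg_nat:
  assumes "z \<noteq> 0"
  shows "I3 q (- real m) z = I3 q (real m) z"
proof -
  let ?f = "\<lambda>k. of_real (I3_coeff q (- real m) k) * (z / 2) powr of_real (- real m + 2 * real k)"
  have "(\<lambda>k. ?f (k + m)) sums I3 q (- real m) z \<longleftrightarrow> ?f sums I3 q (- real m) z"
    by (rule sums_zero_iff_shift) (simp add: I3_coeff_neg_nat_eq_0[OF q])
  then have "(\<lambda>k. ?f (k + m)) sums I3 q (- real m) z"
    using I3_sums[OF q assms, of "- real m"] by blast
  moreover have "(\<lambda>k. ?f (k + m))
                 = (\<lambda>k. of_real (I3_coeff q (real m) k) * (z / 2) powr of_real (real m + 2 * real k))"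
    by (simp add: I3_coeff_neg_nat_shift[OF q] algebra_simps)
  ultimately have "(\<lambda>k. of_real (I3_coeff q (real m) k) * (z / 2) powr of_real (real m + 2 * real k))
                   sums I3 q (- real m) z"
    by simp
  then show ?thesis
    using I3_sums[OF q assms, of "real m"] by (rule sums_unique2)
qed

lemma I3_neg_Ints:
  assumes "z \<noteq> 0" "n \<in> \<int>"
  shows "I3 q (- n) z = I3 q n z"
proof -
  obtain m :: nat where "n = real m \<or> n = - real m"
    using assms(2) by (metis Ints_cases of_int_of_nat_eq of_int_minus int_cases2)
  then show ?thesis
    using I3_neg_nat[OF assms(1), of m] by auto
qed

end

definition qtheta :: "real \<Rightarrow> real \<Rightarrow> real" where
  "qtheta x Q = qpoch_inf x Q * qpoch_inf (Q / x) Q"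

context
  fixes Q :: real
  assumes Q: "0 < Q" "Q < 1"
begin

lemma qtheta_powr: "qtheta (Q powr \<mu>) Q = qpoch_inf (Q powr \<mu>) Q * qpoch_inf (Q powr (1 - \<mu>)) Q"
  using Q by (simp add: qtheta_def powr_diff)

lemma tendsto_qpoch_inf_powr_div:
  "((\<lambda>\<mu>. qpoch_inf (Q powr \<mu>) Q / (\<mu> + real m))
      \<longlongrightarrow> qpoch (Q powr (- real m)) Q m * (- ln Q) * qpoch_inf Q Q) (at (- real m))"
proof -
  have factors: "qpoch_inf (Q powr \<mu>) Q
               = qpoch (Q powr \<mu>) Q m * (1 - Q powr (\<mu> + real m)) * qpoch_inf (Q powr (\<mu> + real m) * Q) Q"
    for \<mu>
    using qpoch_inf_split[OF less_imp_le[OF Q(1)] Q(2), of "Q powr \<mu>" m]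
          qpoch_inf_shift[OF less_imp_le[OF Q(1)] Q(2), of "Q powr (\<mu> + real m)"] Q
    by (simp add: powr_add powr_realpow mult.assoc)
  have "((\<lambda>\<mu>. qpoch (Q powr \<mu>) Q m) \<longlongrightarrow> qpoch (Q powr (- real m)) Q m) (at (- real m))"
    unfolding qpoch_def using Q by (intro tendsto_intros) auto
  moreover have "((\<lambda>\<mu>. (1 - Q powr (\<mu> + real m)) / (\<mu> + real m)) \<longlongrightarrow> - ln Q) (at (- real m))"
    using LIM_offset[OF tendsto_one_minus_powr_div[OF Q(1)], of "real m"] by simp
  moreover have "((\<lambda>\<mu>. qpoch_inf (Q powr (\<mu> + real m) * Q) Q) \<longlongrightarrow> qpoch_inf Q Q) (at (- real m))"
    using Q by (intro isCont_tendsto_compose[OF isCont_qpoch_inf, of Q _ Q, simplified] tendsto_eq_intros)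
       (auto simp: less_imp_le)
  moreover have "(\<lambda>\<mu>. qpoch_inf (Q powr \<mu>) Q / (\<mu> + real m))
      = (\<lambda>\<mu>. qpoch (Q powr \<mu>) Q m * ((1 - Q powr (\<mu> + real m)) / (\<mu> + real m))
              * qpoch_inf (Q powr (\<mu> + real m) * Q) Q)"
    unfolding factors by (simp add: field_simps)
  ultimately show ?thesis
    by (simp only:) (intro tendsto_mult)
qed

lemma qpoch_powr_neg_nonzero: "qpoch (Q powr (- real m)) Q m \<noteq> 0"
proof -
  have "Q powr (- real m) * Q ^ j \<noteq> 1" if "j < m" for j
  proof -
    have "Q powr (- real m) * Q ^ j = Q powr (real j - real m)"
      using Q by (simp add: powr_diff powr_minus_divide powr_realpow)
    then show ?thesis
      using Q that by simp
  qed
  then show ?thesis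
    by (simp add: qpoch_def)
qed

lemma tendsto_qtheta_div_nonpos:
  "\<exists>L. L \<noteq> 0 \<and> ((\<lambda>\<mu>. qtheta (Q powr \<mu>) Q / (\<mu> - (- real m))) \<longlongrightarrow> L) (at (- real m))"
proof -
  have "((\<lambda>\<mu>. qpoch_inf (Q powr (1 - \<mu>)) Q) \<longlongrightarrow> qpoch_inf (Q powr (1 + real m)) Q) (at (- real m))"
    using Q by (intro isCont_tendsto_compose[OF isCont_qpoch_inf] tendsto_eq_intros) (auto simp: less_imp_le)
  then have "((\<lambda>\<mu>. qpoch_inf (Q powr \<mu>) Q / (\<mu> + real m) * qpoch_inf (Q powr (1 - \<mu>)) Q)
               \<longlongrightarrow> qpoch (Q powr (- real m)) Q m * (- ln Q) * qpoch_inf Q Q * qpoch_inf (Q powr (1 + real m)) Q)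
             (at (- real m))"
    by (intro tendsto_mult tendsto_qpoch_inf_powr_div)
  moreover have "Q powr (1 + real m) < 1"
    using powr_mono'[of 1 "1 + real m" Q] Q by simp
  then have "qpoch_inf Q Q \<noteq> 0" "qpoch_inf (Q powr (1 + real m)) Q \<noteq> 0"
    using qpoch_inf_nonzero[of Q Q] qpoch_inf_nonzero[of Q "Q powr (1 + real m)"] Q by auto
  ultimately show ?thesis
    using qpoch_powr_neg_nonzero Q by (intro exI[of _ "qpoch (Q powr (- real m)) Q m * (- ln Q) * qpoch_inf Q Q
        * qpoch_inf (Q powr (1 + real m)) Q"]) (simp add: qtheta_powr)
qed

lemma tendsto_qtheta_div:
  assumes "n \<in> \<int>"
  shows "\<exists>L. L \<noteq> 0 \<and> ((\<lambda>\<mu>. qtheta (Q powr \<mu>) Q / (\<mu> - n)) \<longlongrightarrow> L) (at n)"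
proof -
  obtain i :: int where i: "n = of_int i"
    using assms by (auto elim: Ints_cases)
  obtain m :: nat where "n = - real m \<or> n = 1 + real m"
  proof (cases "i \<le> 0")
    case True
    then show ?thesis
      using that[of "nat (- i)"] i by simp
  next
    case False
    then show ?thesis
      using that[of "nat (i - 1)"] i by simp
  qed
  then show ?thesis
  proof
    assume "n = - real m"
    then show ?thesis
      using tendsto_qtheta_div_nonpos by simp
  next
    assume n: "n = 1 + real m"
    obtain L where "L \<noteq> 0" and L: "((\<lambda>\<mu>. qtheta (Q powr \<mu>) Q / (\<mu> - (- real m))) \<longlongrightarrow> L) (at (- real m))"
      using tendsto_qtheta_div_nonpos by blast
    have "1 - n = - real m"
      using n by simp
    then have "((\<lambda>\<mu>. qtheta (Q powr (1 - \<mu>)) Q / ((1 - \<mu>) - (- real m))) \<longlongrightarrow> L) (at n)"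
      using filterlim_compose[OF L filterlim_diff_left_at[of 1 n, unfolded \<open>1 - n = - real m\<close>]] by simp
    then have "((\<lambda>\<mu>. - (qtheta (Q powr (1 - \<mu>)) Q / ((1 - \<mu>) - (- real m)))) \<longlongrightarrow> - L) (at n)"
      by (rule tendsto_minus)
    moreover have "qtheta (Q powr (1 - \<mu>)) Q = qtheta (Q powr \<mu>) Q" for \<mu>
      by (simp add: qtheta_powr)
    moreover have "- (qtheta (Q powr \<mu>) Q / ((1 - \<mu>) - (- real m))) = qtheta (Q powr \<mu>) Q / (\<mu> - n)" for \<mu>
      using n by (simp add: minus_divide_right)
    ultimately show ?thesis
      using \<open>L \<noteq> 0\<close> by (intro exI[of _ "- L"]) simp
  qed
qed

end

context
  fixes q :: real
  assumes q: "0 < q" "q < 1"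
begin

lemma K3_factor_eq_qtheta:
  "K3_factor q \<mu> = 1/2 * q powr (- (\<mu>^2) + \<mu>) * (qpoch_inf (q^2) (q^2) ^ 2 * (1 - q^2))
                     / qtheta ((q^2) powr \<mu>) (q^2)"
proof -
  have powers: "(1 - q^2) powr (1 - \<mu>) * (1 - q^2) powr (1 - (1 - \<mu>)) = 1 - q^2"
    using q_squared[OF q] by (simp flip: powr_add)
  have regroup: "a * (P / P1 * x) * (P / P2 * y) = a * (P^2 * (x * y)) / (P1 * P2)" for a P P1 P2 x y :: real
    by (simp add: divide_inverse inverse_mult_distrib power2_eq_square mult_ac)
  show ?thesis
    unfolding K3_factor_def qGamma_def qtheta_powr[OF q_squared[OF q]] regroup powers ..
qed

lemma tendsto_I3_diff_div:
  assumes "z \<noteq> 0" "n \<in> \<int>"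
  shows "\<exists>G. ((\<lambda>\<mu>. (I3 q (- \<mu>) z - I3 q \<mu> z) / of_real (\<mu> - n)) \<longlongrightarrow> G) (at n)"
proof -
  define F where "F s = (z / 2) powr s * I3_entire q (z / 2) s" for s
  define G where "G s = F (- s) - F s" for s
  have "F holomorphic_on UNIV"
    unfolding F_def by (intro holomorphic_intros holomorphic_I3_entire[OF q])
  then have "G field_differentiable at s" for s
    unfolding G_def
    by (intro derivative_intros field_differentiable_compose[of uminus, unfolded o_def]
          holomorphic_on_imp_differentiable_at[of F UNIV]) auto
  then obtain G' where "(G has_field_derivative G') (at (of_real n))"
    unfolding field_differentiable_def by blast
  then have "((\<lambda>s. (G s - G (of_real n)) / (s - of_real n)) \<longlongrightarrow> G') (at (of_real n))"
    by (simp add: has_field_derivative_iff)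
  from filterlim_compose[OF this filterlim_of_real_at]
  have "((\<lambda>\<mu>. (G (of_real \<mu>) - G (of_real n)) / (of_real \<mu> - of_real n)) \<longlongrightarrow> G') (at n)" .
  moreover have "G (of_real \<mu>) = I3 q (- \<mu>) z - I3 q \<mu> z" for \<mu>
    using assms(1) by (simp add: G_def F_def I3_eq_I3_entire[OF q])
  ultimately show ?thesis
    using I3_neg_Ints[OF q assms] by auto
qed

lemma tendsto_K3_form:
  assumes "z \<noteq> 0" "n \<in> \<int>"
  shows "((\<lambda>\<mu>. K3_form q \<mu> z) \<longlongrightarrow> K3 q n z) (at n)"
proof -
  define c where "c \<mu> = 1/2 * q powr (- (\<mu>^2) + \<mu>) * (qpoch_inf (q^2) (q^2) ^ 2 * (1 - q^2))" for \<mu>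
  obtain G where G: "((\<lambda>\<mu>. (I3 q (- \<mu>) z - I3 q \<mu> z) / of_real (\<mu> - n)) \<longlongrightarrow> G) (at n)"
    using tendsto_I3_diff_div[OF assms] by blast
  obtain L where "L \<noteq> 0" and L: "((\<lambda>\<mu>. qtheta ((q^2) powr \<mu>) (q^2) / (\<mu> - n)) \<longlongrightarrow> L) (at n)"
    using tendsto_qtheta_div[OF q_squared[OF q] assms(2)] by blast
  have "((\<lambda>\<mu>. of_real (c \<mu>) * ((I3 q (- \<mu>) z - I3 q \<mu> z) / of_real (\<mu> - n))
                / of_real (qtheta ((q^2) powr \<mu>) (q^2) / (\<mu> - n)))
         \<longlongrightarrow> of_real (c n) * G / of_real L) (at n)"
    unfolding c_def using q \<open>L \<noteq> 0\<close> by (intro tendsto_intros G L) auto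
  moreover have "\<forall>\<^sub>F \<mu> in at n.
      of_real (c \<mu>) * ((I3 q (- \<mu>) z - I3 q \<mu> z) / of_real (\<mu> - n))
        / of_real (qtheta ((q^2) powr \<mu>) (q^2) / (\<mu> - n)) = K3_form q \<mu> z"
  proof (rule eventually_mono[OF eventually_neq_at_within[of n]])
    fix \<mu> assume "\<mu> \<noteq> n"
    then show "of_real (c \<mu>) * ((I3 q (- \<mu>) z - I3 q \<mu> z) / of_real (\<mu> - n))
                 / of_real (qtheta ((q^2) powr \<mu>) (q^2) / (\<mu> - n)) = K3_form q \<mu> z"
      unfolding K3_form_eq K3_factor_eq_qtheta c_def[symmetric]
      by (cases "qtheta ((q^2) powr \<mu>) (q^2) = 0") (simp_all add: field_simps)
  qed
  ultimately have "((\<lambda>\<mu>. K3_form q \<mu> z) \<longlongrightarrow> of_real (c n) * G / of_real L) (at n)"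
    by (rule Lim_transform_eventually)
  moreover from this have "K3 q n z = of_real (c n) * G / of_real L"
    using assms(2) by (simp add: K3_def tendsto_Lim)
  ultimately show ?thesis
    by simp
qed

end

lemma K_recurrences_tendsto:
  assumes "0 < q"
    and "\<forall>\<^sub>F \<mu> in at \<nu>. K_recurrences q K \<mu> z"
    and "((\<lambda>\<mu>. K (\<mu> - 1) z) \<longlongrightarrow> L (\<nu> - 1) z) (at \<nu>)"
    and "((\<lambda>\<mu>. K (\<mu> + 1) z) \<longlongrightarrow> L (\<nu> + 1) z) (at \<nu>)"
    and "((\<lambda>\<mu>. K \<mu> (of_real (q powr (1/2)) * z)) \<longlongrightarrow> L \<nu> (of_real (q powr (1/2)) * z)) (at \<nu>)"
    and "((\<lambda>\<mu>. K \<mu> (of_real (q powr (-1/2)) * z)) \<longlongrightarrow> L \<nu> (of_real (q powr (-1/2)) * z)) (at \<nu>)"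
  shows "K_recurrences q L \<nu> z"
proof -
  have lim_eq: "a = b"
    if "(f \<longlongrightarrow> a) (at \<nu>)" "(g \<longlongrightarrow> b) (at \<nu>)" "\<forall>\<^sub>F \<mu> in at \<nu>. f \<mu> = g \<mu>"
    for f g :: "real \<Rightarrow> complex" and a b
    using tendsto_unique[OF _ Lim_transform_eventually[OF that(1,3)] that(2)] by simp
  have powr: "((\<lambda>\<mu>. q powr f \<mu>) \<longlongrightarrow> q powr f \<nu>) (at \<nu>)" if "(f \<longlongrightarrow> f \<nu>) (at \<nu>)" for f
    using assms(1) by (intro tendsto_powr tendsto_const that) simp
  note ev = assms(2)[unfolded K_recurrences_def eventually_conj_iff]
  show ?thesis
    unfolding K_recurrences_def
  proof (intro conjI)
    show "complex_of_real (q powr (-\<nu>/2)) * L (\<nu> - 1) z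
            - complex_of_real (q powr (\<nu>/2)) * L (\<nu> + 1) z
          = - (2 / (complex_of_real (1 - q^2) * z))
              * complex_of_real (q powr (-\<nu>) - q powr \<nu>)
              * L \<nu> (complex_of_real (q powr (1/2)) * z)"
      by (rule lim_eq[OF _ _ conjunct1[OF ev]];
          intro tendsto_diff tendsto_mult tendsto_of_real tendsto_const assms(3-6) powr tendsto_minus
            tendsto_divide tendsto_ident_at; simp)
    show "complex_of_real (q powr (-\<nu>/2)) * L (\<nu> - 1) z
            + complex_of_real (q powr (\<nu>/2)) * L (\<nu> + 1) z
          = - (4 / (complex_of_real (1 - q^2) * z))
              * L \<nu> (complex_of_real (q powr (-1/2)) * z)
            + (2 / (complex_of_real (1 - q^2) * z))
              * complex_of_real (q powr (-\<nu>) + q powr \<nu>)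
              * L \<nu> (complex_of_real (q powr (1/2)) * z)"
      by (rule lim_eq[OF _ _ conjunct2[OF ev]];
          intro tendsto_add tendsto_diff tendsto_mult tendsto_of_real tendsto_const assms(3-6) powr tendsto_minus
            tendsto_divide tendsto_ident_at; simp)
  qed
qed

lemma K_recurrences_K3:
  assumes q: "0 < q" "q < 1" and "z \<noteq> 0"
  shows "K_recurrences q (K3 q) \<nu> z"
proof (cases "\<nu> \<in> \<int>")
  case False
  then have "\<nu> - 1 \<notin> \<int>" "\<nu> + 1 \<notin> \<int>" "\<nu> \<noteq> 0" "\<nu> \<noteq> 1"
    by (metis Ints_1 Ints_add Ints_diff diff_add_cancel add_diff_cancel Ints_0)+
  then show ?thesis
    using K_recurrences_K3_form[OF q \<open>z \<noteq> 0\<close>] False by (simp add: K3_def K_recurrences_def)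
next
  case True
  have "\<forall>\<^sub>F \<mu> in at \<nu>. K_recurrences q (K3_form q) \<mu> z"
    using eventually_conj[OF eventually_neq_at_within[of 0] eventually_neq_at_within[of 1]]
    by eventually_elim (auto intro: K_recurrences_K3_form[OF q \<open>z \<noteq> 0\<close>])
  moreover have "((\<lambda>\<mu>. K3_form q (\<mu> + c) z) \<longlongrightarrow> K3 q (\<nu> + c) z) (at \<nu>)" if "c \<in> \<int>" for c
    using LIM_offset[OF tendsto_K3_form[OF q \<open>z \<noteq> 0\<close>, of "\<nu> + c"], of c] True that by simp
  from this[of "- 1"] this[of 1]
  have "((\<lambda>\<mu>. K3_form q (\<mu> - 1) z) \<longlongrightarrow> K3 q (\<nu> - 1) z) (at \<nu>)"
    "((\<lambda>\<mu>. K3_form q (\<mu> + 1) z) \<longlongrightarrow> K3 q (\<nu> + 1) z) (at \<nu>)"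
    by simp_all
  moreover have "((\<lambda>\<mu>. K3_form q \<mu> (of_real r * z)) \<longlongrightarrow> K3 q \<nu> (of_real r * z)) (at \<nu>)" if "r > 0" for r
    using that \<open>z \<noteq> 0\<close> True by (intro tendsto_K3_form[OF q]) auto
  ultimately show ?thesis
    using q by (intro K_recurrences_tendsto) auto
qed

theorem proposition3p2:
  fixes q \<nu> :: real and z :: complex
  assumes "0 < q" "q < 1"
    and "z \<notin> complex_of_real ` {..0}"
  shows "(complex_of_real (q powr (-\<nu>/2)) * K3 q (\<nu> - 1) z
           - complex_of_real (q powr (\<nu>/2)) * K3 q (\<nu> + 1) z
         = - (2 / (complex_of_real (1 - q^2) * z))
             * complex_of_real (q powr (-\<nu>) - q powr \<nu>)
             * K3 q \<nu> (complex_of_real (q powr (1/2)) * z)) \<and>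
         (complex_of_real (q powr (-\<nu>/2)) * K3 q (\<nu> - 1) z
           + complex_of_real (q powr (\<nu>/2)) * K3 q (\<nu> + 1) z
         = - (4 / (complex_of_real (1 - q^2) * z))
             * K3 q \<nu> (complex_of_real (q powr (-1/2)) * z)
           + (2 / (complex_of_real (1 - q^2) * z))
             * complex_of_real (q powr (-\<nu>) + q powr \<nu>)
             * K3 q \<nu> (complex_of_real (q powr (1/2)) * z))"
proof -
  have "z \<noteq> 0"
    using assms(3) by (metis atMost_iff image_eqI of_real_0 order_refl)
  with assms(1,2) have "K_recurrences q (K3 q) \<nu> z"
    by (rule K_recurrences_K3)
  then show ?thesis
    unfolding K_recurrences_def .
qed

end
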